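(* Let $f$ be a quadratic rational map with critical values $v_1,v_2$ satisfying $f(v_1)=f(v_2)=\beta$, $f(\beta)=\alpha$, $f(\alpha)=\alpha$, with $\alpha\neq\beta$. Then $$[v_1:v_2:\alpha:\beta]\in\{-1,\ 3+2\sqrt2,\ 3-2\sqrt2\}.$$
   Context: For four points $p,q,r,s\in\hat{\mathbb{C}}$ with $p,q,r$ distinct, the cross-ratio $[p:q:r:s]$ is defined as $z(s)$, where $z$ is the unique Möbius transformation with $z(p)=0$, $z(q)=\infty$, $z(r)=1$. *)

theory Defs
  imports "HOL-Analysis.Analysis" "HOL-Computational_Algebra.Computational_Algebra"
begin

text \<open>The Riemann sphere is modelled as \<open>complex option\<close>: \<open>Some z\<close> is the
  point z of the complex plane and \<open>None\<close> is the point at infinity.\<close>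

type_synonym csphere = "complex option"

definition moebius :: "complex \<Rightarrow> complex \<Rightarrow> complex \<Rightarrow> complex \<Rightarrow> csphere \<Rightarrow> csphere" where
  "moebius a b c d x = (case x of
      Some z \<Rightarrow> (if c * z + d = 0 then None else Some ((a * z + b) / (c * z + d)))
    | None \<Rightarrow> (if c = 0 then None else Some (a / c)))"

definition is_moebius :: "(csphere \<Rightarrow> csphere) \<Rightarrow> bool" where
  "is_moebius g \<longleftrightarrow> (\<exists>a b c d. a * d - b * c \<noteq> 0 \<and> g = moebius a b c d)"

definition cross_ratio :: "csphere \<Rightarrow> csphere \<Rightarrow> csphere \<Rightarrow> csphere \<Rightarrow> csphere" where
  "cross_ratio p q r s =
     (THE g. is_moebius g \<and> g p = Some 0 \<and> g q = None \<and> g r = Some 1) s"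

definition rat_map :: "complex poly \<Rightarrow> complex poly \<Rightarrow> csphere \<Rightarrow> csphere" where
  "rat_map P Q x = (case x of
      Some z \<Rightarrow> (if poly Q z = 0 then None else Some (poly P z / poly Q z))
    | None \<Rightarrow> (if degree P < degree Q then Some 0
               else if degree Q < degree P then None
               else Some (lead_coeff P / lead_coeff Q)))"

definition quadratic_rational_map :: "(csphere \<Rightarrow> csphere) \<Rightarrow> bool" where
  "quadratic_rational_map f \<longleftrightarrow>
     (\<exists>P Q. coprime P Q \<and> max (degree P) (degree Q) = 2 \<and> f = rat_map P Q)"

definition chart_in :: "csphere \<Rightarrow> complex \<Rightarrow> csphere" where
  "chart_in c t = (case c of
      Some a \<Rightarrow> Some (a + t)
    | None \<Rightarrow> (if t = 0 then None else Some (1 / t)))"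

definition chart_out :: "csphere \<Rightarrow> csphere \<Rightarrow> complex" where
  "chart_out v w = (case v of
      Some b \<Rightarrow> (case w of Some y \<Rightarrow> y - b | None \<Rightarrow> 0)
    | None \<Rightarrow> (case w of None \<Rightarrow> 0 | Some y \<Rightarrow> 1 / y))"

definition critical_point :: "(csphere \<Rightarrow> csphere) \<Rightarrow> csphere \<Rightarrow> bool" where
  "critical_point f c \<longleftrightarrow>
     ((\<lambda>t. chart_out (f c) (f (chart_in c t))) has_field_derivative 0) (at 0)"

end

theory Submission
  imports Defs
begin

text \<open>Work in homogeneous coordinates: a quadratic map lifts to a pair of binary quadratic forms
  (P, Q), and if c is a critical point with value [a:b], then b P - a Q is a quadratic form
  vanishing to second order at c, hence equal to k det(c, -)^2 with k \<noteq> 0.  Comparing the two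
  critical points c1, c2 gives, for every w,
  k2 det(c2, w)^2 det(f w, v1) = k1 det(c1, w)^2 det(f w, v2).
  Evaluating at w = v1, v2, \<beta>, \<alpha> yields four polynomial equations.  The first two force c1 and
  c2 to be opposite in the coordinate in which v1 = 0 and v2 = \<infinity>; the last two then reduce to
  x (x + e)^2 = (x - e)^2 and x (1 + e)^2 = (1 - e)^2 for the cross-ratio x, whose solutions with
  x \<noteq> 1 are -1 and 3 \<plusminus> 2 sqrt 2.\<close>

definition proj :: "complex \<Rightarrow> complex \<Rightarrow> csphere" where
  "proj x y = (if y = 0 then None else Some (x / y))"

definition hcoord0 :: "csphere \<Rightarrow> complex" where
  "hcoord0 p = (case p of Some z \<Rightarrow> z | None \<Rightarrow> 1)"

definition hcoord1 :: "csphere \<Rightarrow> complex" where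
  "hcoord1 p = (case p of Some z \<Rightarrow> 1 | None \<Rightarrow> 0)"

definition det2 :: "complex \<Rightarrow> complex \<Rightarrow> complex \<Rightarrow> complex \<Rightarrow> complex" where
  "det2 x0 x1 y0 y1 = x0 * y1 - x1 * y0"

definition sphere_det :: "csphere \<Rightarrow> csphere \<Rightarrow> complex" where
  "sphere_det p q = det2 (hcoord0 p) (hcoord1 p) (hcoord0 q) (hcoord1 q)"

lemma proj_hcoord [simp]: "proj (hcoord0 p) (hcoord1 p) = p"
  by (cases p) (auto simp: proj_def hcoord0_def hcoord1_def)

lemma hcoord_nonzero: "hcoord0 p \<noteq> 0 \<or> hcoord1 p \<noteq> 0"
  by (cases p) (auto simp: hcoord0_def hcoord1_def)

lemma proj_eq_iff:
  assumes "x \<noteq> 0 \<or> y \<noteq> 0" "u \<noteq> 0 \<or> v \<noteq> 0"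
  shows "proj x y = proj u v \<longleftrightarrow> x * v = y * u"
  using assms by (auto simp: proj_def field_simps)

lemma proj_scale: "s \<noteq> 0 \<Longrightarrow> proj (s * x) (s * y) = proj x y"
  by (auto simp: proj_def)

lemma hcoord_proj:
  assumes "x \<noteq> 0 \<or> y \<noteq> 0"
  obtains \<mu> where "\<mu> \<noteq> 0" "x = \<mu> * hcoord0 (proj x y)" "y = \<mu> * hcoord1 (proj x y)"
proof (cases "y = 0")
  case True
  then show ?thesis using assms that[of x] by (simp add: proj_def hcoord0_def hcoord1_def)
next
  case False
  then show ?thesis using that[of y] by (simp add: proj_def hcoord0_def hcoord1_def)
qed

lemma sphere_det_eq_0_iff [simp]: "sphere_det p q = 0 \<longleftrightarrow> p = q"
  using proj_eq_iff[OF hcoord_nonzero hcoord_nonzero, of p q]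
  by (auto simp: sphere_det_def det2_def)

lemma sphere_det_self [simp]: "sphere_det p p = 0"
  by simp

lemma sphere_det_swap: "sphere_det q p = - sphere_det p q"
  by (simp add: sphere_det_def det2_def)

lemma sphere_det_pluecker:
  "sphere_det b c * sphere_det w a + sphere_det c a * sphere_det w b = sphere_det a b * sphere_det c w"
  by (simp add: sphere_det_def det2_def algebra_simps)

lemma moebius_proj:
  assumes "a * d - b * c \<noteq> 0" "x \<noteq> 0 \<or> y \<noteq> 0"
  shows "moebius a b c d (proj x y) = proj (a * x + b * y) (c * x + d * y)"
    and "a * x + b * y \<noteq> 0 \<or> c * x + d * y \<noteq> 0"
proof -
  show "a * x + b * y \<noteq> 0 \<or> c * x + d * y \<noteq> 0"
  proof (rule ccontr)
    assume "\<not> ?thesis"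
    moreover have "(a * d - b * c) * x = d * (a * x + b * y) - b * (c * x + d * y)"
      and "(a * d - b * c) * y = a * (c * x + d * y) - c * (a * x + b * y)"
      by (simp_all add: algebra_simps)
    ultimately show False using assms by auto
  qed
  show "moebius a b c d (proj x y) = proj (a * x + b * y) (c * x + d * y)"
  proof (cases "y = 0")
    case True
    then show ?thesis using assms(2) by (auto simp: moebius_def proj_def)
  next
    case False
    have "c * x + d * y = y * (c * (x / y) + d)" "a * x + b * y = y * (a * (x / y) + b)"
      using False by (auto simp: field_simps)
    then show ?thesis using False proj_scale[of y] by (auto simp: moebius_def proj_def)
  qed
qed

lemma cross_ratio_sphere_det:
  assumes "p \<noteq> q" "q \<noteq> r" "p \<noteq> r"
  shows "cross_ratio p q r s =
    proj (sphere_det p s * sphere_det r q) (sphere_det s q * sphere_det p r)"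
proof -
  define k1 where "k1 = sphere_det r q"
  define k2 where "k2 = sphere_det p r"
  define g0 where
    "g0 = moebius (- k1 * hcoord1 p) (k1 * hcoord0 p) (k2 * hcoord1 q) (- k2 * hcoord0 q)"
  have nonzero: "k1 \<noteq> 0" "k2 \<noteq> 0" "sphere_det p q \<noteq> 0"
    using assms by (auto simp: k1_def k2_def)
  have det: "(- k1 * hcoord1 p) * (- k2 * hcoord0 q) - (k1 * hcoord0 p) * (k2 * hcoord1 q) \<noteq> 0"
  proof -
    have "(- k1 * hcoord1 p) * (- k2 * hcoord0 q) - (k1 * hcoord0 p) * (k2 * hcoord1 q)
        = - (k1 * k2 * sphere_det p q)"
      by (simp add: sphere_det_def det2_def algebra_simps)
    then show ?thesis using nonzero by simp
  qed
  have g0: "g0 w = proj (sphere_det p w * k1) (sphere_det w q * k2)" for w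
    using moebius_proj(1)[OF det hcoord_nonzero, of w]
    by (simp add: g0_def sphere_det_def det2_def algebra_simps)
  let ?\<Phi> = "\<lambda>g. is_moebius g \<and> g p = Some 0 \<and> g q = None \<and> g r = Some 1"
  have "is_moebius g0"
    unfolding is_moebius_def g0_def using det by blast
  then have "?\<Phi> g0"
    using nonzero by (auto simp: g0 proj_def sphere_det_swap[of r p] k1_def k2_def)
  moreover have "g = g0" if \<Phi>: "?\<Phi> g" for g
  proof
    fix x
    obtain a b c d where abcd: "a * d - b * c \<noteq> 0" and g: "g = moebius a b c d"
      using \<Phi> unfolding is_moebius_def by blast
    note g_proj = moebius_proj[OF abcd hcoord_nonzero]
    have gw: "g w = proj (a * hcoord0 w + b * hcoord1 w) (c * hcoord0 w + d * hcoord1 w)" for w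
      using g_proj(1)[of w] by (simp add: g)
    have "a * hcoord0 p + b * hcoord1 p = 0" "c * hcoord0 q + d * hcoord1 q = 0"
      "a * hcoord0 r + b * hcoord1 r = c * hcoord0 r + d * hcoord1 r"
      using \<Phi> gw[of p] gw[of q] gw[of r] by (auto simp: proj_def split: if_splits)
    then have "sphere_det p q * ((a * hcoord0 x + b * hcoord1 x) * (sphere_det x q * k2)
        - (c * hcoord0 x + d * hcoord1 x) * (sphere_det p x * k1)) = 0"
      unfolding sphere_det_def det2_def k1_def k2_def by algebra
    moreover have "sphere_det p x * k1 \<noteq> 0 \<or> sphere_det x q * k2 \<noteq> 0"
      using nonzero by auto
    ultimately have "proj (a * hcoord0 x + b * hcoord1 x) (c * hcoord0 x + d * hcoord1 x)
        = proj (sphere_det p x * k1) (sphere_det x q * k2)"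
      using nonzero g_proj(2) by (subst proj_eq_iff) auto
    then show "g x = g0 x"
      by (simp add: gw g0)
  qed
  ultimately have "(THE g. ?\<Phi> g) = g0" by (rule the_equality)
  then show ?thesis unfolding cross_ratio_def by (simp add: g0 k1_def k2_def)
qed

definition homog2 :: "complex poly \<Rightarrow> complex \<Rightarrow> complex \<Rightarrow> complex" where
  "homog2 P x y = coeff P 0 * y^2 + coeff P 1 * x * y + coeff P 2 * x^2"

lemma poly_degree_le_2:
  fixes P :: "complex poly"
  assumes "degree P \<le> 2"
  shows "poly P z = coeff P 0 + coeff P 1 * z + coeff P 2 * z^2"
proof -
  have "poly P z = (\<Sum>i\<le>2. coeff P i * z ^ i)"
    unfolding poly_altdef
    by (rule sum.mono_neutral_left) (use assms in \<open>auto simp: coeff_eq_0\<close>)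
  then show ?thesis by (simp add: numeral_2_eq_2)
qed

lemma homog2_poly: "degree P \<le> 2 \<Longrightarrow> y \<noteq> 0 \<Longrightarrow> homog2 P x y = y^2 * poly P (x / y)"
  by (simp add: poly_degree_le_2 homog2_def field_simps power2_eq_square)

lemma coprime_no_common_root:
  fixes P Q :: "complex poly"
  assumes "coprime P Q" "poly P z = 0" "poly Q z = 0"
  shows False
proof -
  have "is_unit [:-z, 1:]"
    using coprime_common_divisor[OF assms(1)] assms(2,3) by (simp add: poly_eq_0_iff_dvd)
  then show False
    using is_unit_iff_degree[of "[:-z, 1:]"] by simp
qed

definition homog2_deriv :: "complex poly \<Rightarrow> complex \<Rightarrow> complex \<Rightarrow> complex \<Rightarrow> complex \<Rightarrow> complex" where
  "homog2_deriv P x y u v = coeff P 0 * (2 * y * v) + coeff P 1 * (u * y + x * v) + coeff P 2 * (2 * x * u)"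

lemma has_field_derivative_homog2:
  "((\<lambda>t. homog2 P (x + t * u) (y + t * v)) has_field_derivative homog2_deriv P x y u v) (at 0)"
proof -
  have "((\<lambda>t. homog2 P (x + t * u) (y + t * v)) has_field_derivative
      coeff P 0 * (2 * (y + 0 * v) * v) + coeff P 1 * (u * (y + 0 * v) + (x + 0 * u) * v)
      + coeff P 2 * (2 * (x + 0 * u) * u)) (at 0)"
    unfolding homog2_def
    by (rule derivative_eq_intros refl | simp add: power2_eq_square algebra_simps)+
  then show ?thesis by (simp add: homog2_deriv_def)
qed

text \<open>A binary quadratic form with a double zero at c is determined up to a factor by c.\<close>

lemma binary_quadratic_double_zero:
  fixes g0 g1 g2 c0 c1 d0 d1 w0 w1 :: complex
  assumes "g0 * c1^2 + g1 * c0 * c1 + g2 * c0^2 = 0"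
    and "g0 * (2 * c1 * d1) + g1 * (d0 * c1 + c0 * d1) + g2 * (2 * c0 * d0) = 0"
  shows "(g0 * w1^2 + g1 * w0 * w1 + g2 * w0^2) * (det2 c0 c1 d0 d1)^2
    = (g0 * d1^2 + g1 * d0 * d1 + g2 * d0^2) * (det2 c0 c1 w0 w1)^2"
  using assms unfolding det2_def by algebra

text \<open>In homogeneous coordinates the chart at c moves along the direction (hcoord1 c, 1 - hcoord1 c),
  which is transversal to c.\<close>

lemma chart_in_proj:
  "chart_in c t = proj (hcoord0 c + t * hcoord1 c) (hcoord1 c + t * (1 - hcoord1 c))"
  by (cases c) (auto simp: chart_in_def proj_def hcoord0_def hcoord1_def)

lemma chart_in_nonzero: "hcoord0 c + t * hcoord1 c \<noteq> 0 \<or> hcoord1 c + t * (1 - hcoord1 c) \<noteq> 0"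
  by (cases c) (auto simp: hcoord0_def hcoord1_def)

lemma det2_chart_direction: "(det2 (hcoord0 c) (hcoord1 c) (hcoord1 c) (1 - hcoord1 c))^2 = 1"
  by (cases c) (auto simp: hcoord0_def hcoord1_def det2_def)

locale quadratic_rat_map =
  fixes P Q :: "complex poly"
  assumes coprime: "coprime P Q" and degree: "max (degree P) (degree Q) = 2"
begin

lemma degree_le_2: "degree P \<le> 2" "degree Q \<le> 2"
  using degree by auto

lemma rat_map_proj:
  assumes "x \<noteq> 0 \<or> y \<noteq> 0"
  shows "rat_map P Q (proj x y) = proj (homog2 P x y) (homog2 Q x y)"
    and "homog2 P x y \<noteq> 0 \<or> homog2 Q x y \<noteq> 0"
proof -
  have "rat_map P Q (proj x y) = proj (homog2 P x y) (homog2 Q x y) \<and>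
      (homog2 P x y \<noteq> 0 \<or> homog2 Q x y \<noteq> 0)"
  proof (cases "y = 0")
    case False
    have "poly P (x / y) \<noteq> 0 \<or> poly Q (x / y) \<noteq> 0"
      using coprime_no_common_root[OF coprime] by blast
    moreover have "proj (homog2 P x y) (homog2 Q x y) = proj (poly P (x / y)) (poly Q (x / y))"
      using proj_scale[of "y^2"] False by (simp add: homog2_poly degree_le_2)
    ultimately show ?thesis
      using False by (auto simp: proj_def rat_map_def homog2_poly degree_le_2)
  next
    case True
    then have "x \<noteq> 0" using assms by auto
    have coeff2: "degree R = 2 \<Longrightarrow> coeff R 2 \<noteq> 0" "degree R < 2 \<Longrightarrow> coeff R 2 = 0"
      for R :: "complex poly"
      by (metis degree_0 leading_coeff_0_iff zero_neq_numeral) (simp add: coeff_eq_0)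
    have homog2_inf: "homog2 P x 0 = x^2 * coeff P 2" "homog2 Q x 0 = x^2 * coeff Q 2"
      by (simp_all add: homog2_def)
    consider "degree P < 2" "degree Q = 2" | "degree Q < 2" "degree P = 2"
      | "degree P = 2" "degree Q = 2"
      using degree by linarith
    then show ?thesis
      using True \<open>x \<noteq> 0\<close> coeff2[of P] coeff2[of Q]
      by cases (simp_all add: homog2_inf proj_def rat_map_def)
  qed
  then show "rat_map P Q (proj x y) = proj (homog2 P x y) (homog2 Q x y)"
    "homog2 P x y \<noteq> 0 \<or> homog2 Q x y \<noteq> 0"
    by auto
qed

lemma homog2_independent:
  assumes "a \<noteq> 0 \<or> b \<noteq> 0" and "\<And>x y. b * homog2 P x y - a * homog2 Q x y = 0"
  shows False
proof -
  have "b * coeff P n = a * coeff Q n" for n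
  proof -
    consider "n = 0" | "n = 1" | "n = 2" | "n > 2" by linarith
    then show ?thesis
    proof cases
      case 1
      then show ?thesis using assms(2)[of 0 1] by (simp add: homog2_def)
    next
      case 2
      then show ?thesis using assms(2)[of 1 1] assms(2)[of 0 1] assms(2)[of 1 0]
        by (simp add: homog2_def algebra_simps)
    next
      case 3
      then show ?thesis using assms(2)[of 1 0] by (simp add: homog2_def)
    next
      case 4
      then show ?thesis using degree_le_2 by (simp add: coeff_eq_0)
    qed
  qed
  then have eq: "smult b P = smult a Q" by (simp add: poly_eq_iff)
  show False
  proof (cases "b = 0")
    case True
    then have "Q = 0" using eq assms(1) by simp
    then have "is_unit P" using coprime by simp
    then have "degree P = 0" using is_unit_iff_degree[of P] by fastforce
    then show False using degree \<open>Q = 0\<close> by simp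
  next
    case False
    then have P: "P = smult (a / b) Q"
      using arg_cong[OF eq, of "smult (1 / b)"] by simp
    then have "is_unit Q" using coprime coprime_absorb_right dvd_smult dvd_refl by metis
    then have "degree Q = 0" using is_unit_iff_degree[of Q] by fastforce
    then show False using degree P by (simp split: if_splits)
  qed
qed

lemma critical_point_wronskian:
  assumes "critical_point (rat_map P Q) c"
  defines "x \<equiv> hcoord0 c" and "y \<equiv> hcoord1 c" and "u \<equiv> hcoord1 c" and "v \<equiv> 1 - hcoord1 c"
  shows "homog2_deriv P x y u v * homog2 Q x y - homog2 P x y * homog2_deriv Q x y u v = 0"
proof -
  define p where "p t = homog2 P (x + t * u) (y + t * v)" for t
  define q where "q t = homog2 Q (x + t * u) (y + t * v)" for t
  have image: "rat_map P Q (chart_in c t) = proj (p t) (q t)" for t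
    unfolding chart_in_proj p_def q_def x_def y_def u_def v_def
    using rat_map_proj(1)[OF chart_in_nonzero] by simp
  have image0: "rat_map P Q c = proj (p 0) (q 0)"
    using image[of 0] by (simp add: chart_in_def split: option.splits)
  have nonzero: "p 0 \<noteq> 0 \<or> q 0 \<noteq> 0"
    using rat_map_proj(2)[OF hcoord_nonzero, of c] unfolding p_def q_def x_def y_def by simp
  have dp: "(p has_field_derivative homog2_deriv P x y u v) (at 0)"
    and dq: "(q has_field_derivative homog2_deriv Q x y u v) (at 0)"
    unfolding p_def q_def by (rule has_field_derivative_homog2)+
  have crit: "((\<lambda>t. chart_out (proj (p 0) (q 0)) (proj (p t) (q t))) has_field_derivative 0) (at 0)"
    using assms(1) unfolding critical_point_def image image0 .
  show ?thesis
  proof (cases "q 0 = 0")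
    case True
    then have "(\<lambda>t. chart_out (proj (p 0) (q 0)) (proj (p t) (q t))) = (\<lambda>t. q t / p t)"
      by (auto simp: chart_out_def proj_def)
    moreover have "((\<lambda>t. q t / p t) has_field_derivative
        (homog2_deriv Q x y u v * p 0 - q 0 * homog2_deriv P x y u v) / (p 0 * p 0)) (at 0)"
      using True nonzero by (intro DERIV_divide dq dp) auto
    ultimately have "(homog2_deriv Q x y u v * p 0 - q 0 * homog2_deriv P x y u v) / (p 0 * p 0) = 0"
      using crit DERIV_unique by metis
    then show ?thesis using True nonzero by (simp add: p_def q_def)
  next
    case False
    have "isCont q 0" using dq by (rule DERIV_isCont)
    then have "eventually (\<lambda>t. q t \<noteq> 0) (nhds 0)"
      using False tendsto_imp_eventually_ne[of q "q 0" "nhds 0" 0]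
      unfolding isCont_def tendsto_at_iff_tendsto_nhds by simp
    then have ev: "eventually (\<lambda>t. chart_out (proj (p 0) (q 0)) (proj (p t) (q t))
        = p t / q t - p 0 / q 0) (nhds 0)"
      by eventually_elim (use False in \<open>auto simp: chart_out_def proj_def\<close>)
    then have "((\<lambda>t. p t / q t - p 0 / q 0) has_field_derivative 0) (at 0)"
      using crit DERIV_cong_ev[OF refl ev refl] by blast
    moreover have "((\<lambda>t. p t / q t - p 0 / q 0) has_field_derivative
        (homog2_deriv P x y u v * q 0 - p 0 * homog2_deriv Q x y u v) / (q 0 * q 0) - 0) (at 0)"
      using False dp dq by (intro derivative_eq_intros DERIV_divide[OF dp dq]) auto
    ultimately have "(homog2_deriv P x y u v * q 0 - p 0 * homog2_deriv Q x y u v) / (q 0 * q 0) = 0"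
      using DERIV_unique by fastforce
    then show ?thesis using False by (simp add: p_def q_def)
  qed
qed

lemma critical_point_square_form:
  assumes "critical_point (rat_map P Q) c"
  obtains k where "k \<noteq> 0"
    "\<And>w. det2 (homog2 P (hcoord0 w) (hcoord1 w)) (homog2 Q (hcoord0 w) (hcoord1 w))
        (hcoord0 (rat_map P Q c)) (hcoord1 (rat_map P Q c)) = k * (sphere_det c w)^2"
proof -
  define a where "a = homog2 P (hcoord0 c) (hcoord1 c)"
  define b where "b = homog2 Q (hcoord0 c) (hcoord1 c)"
  define g where "g i = b * coeff P i - a * coeff Q i" for i
  have g: "b * homog2 P x y - a * homog2 Q x y = g 0 * y^2 + g 1 * x * y + g 2 * x^2" for x y
    unfolding g_def homog2_def by (simp add: algebra_simps)
  have zero: "g 0 * (hcoord1 c)^2 + g 1 * hcoord0 c * hcoord1 c + g 2 * (hcoord0 c)^2 = 0"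
    using g[of "hcoord0 c" "hcoord1 c"] unfolding a_def b_def by (simp add: mult.commute)
  have double_zero: "g 0 * (2 * hcoord1 c * (1 - hcoord1 c))
      + g 1 * (hcoord1 c * hcoord1 c + hcoord0 c * (1 - hcoord1 c))
      + g 2 * (2 * hcoord0 c * hcoord1 c) = 0"
    using critical_point_wronskian[OF assms] unfolding g_def homog2_deriv_def a_def b_def
    by (simp add: algebra_simps)
  have "b * homog2 P x y - a * homog2 Q x y
      = (g 0 * (1 - hcoord1 c)^2 + g 1 * hcoord1 c * (1 - hcoord1 c) + g 2 * (hcoord1 c)^2)
        * (det2 (hcoord0 c) (hcoord1 c) x y)^2" for x y
    using binary_quadratic_double_zero[OF zero double_zero, of y x]
    unfolding g det2_chart_direction by simp
  then obtain k where k: "\<And>x y. b * homog2 P x y - a * homog2 Q x y = k * (det2 (hcoord0 c) (hcoord1 c) x y)^2"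
    by blast
  have ab: "a \<noteq> 0 \<or> b \<noteq> 0"
    unfolding a_def b_def by (rule rat_map_proj(2)[OF hcoord_nonzero])
  then have "k \<noteq> 0" using homog2_independent[of a b] k by auto
  have "rat_map P Q c = proj a b"
    unfolding a_def b_def using rat_map_proj(1)[OF hcoord_nonzero, of c] by simp
  then obtain \<sigma> where "\<sigma> \<noteq> 0" and
    scale: "a = \<sigma> * hcoord0 (rat_map P Q c)" "b = \<sigma> * hcoord1 (rat_map P Q c)"
    using hcoord_proj[OF ab] by metis
  have "det2 (homog2 P (hcoord0 w) (hcoord1 w)) (homog2 Q (hcoord0 w) (hcoord1 w))
      (hcoord0 (rat_map P Q c)) (hcoord1 (rat_map P Q c)) = k / \<sigma> * (sphere_det c w)^2" for w
    using k[of "hcoord0 w" "hcoord1 w"] \<open>\<sigma> \<noteq> 0\<close>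
    unfolding scale by (simp add: det2_def sphere_det_def field_simps)
  moreover have "k / \<sigma> \<noteq> 0" using \<open>k \<noteq> 0\<close> \<open>\<sigma> \<noteq> 0\<close> by simp
  ultimately show ?thesis using that by blast
qed

lemma homog2_det_sphere_det:
  obtains \<mu> where "\<And>v. det2 (homog2 P (hcoord0 w) (hcoord1 w)) (homog2 Q (hcoord0 w) (hcoord1 w))
      (hcoord0 v) (hcoord1 v) = \<mu> * sphere_det (rat_map P Q w) v"
proof -
  have "rat_map P Q w = proj (homog2 P (hcoord0 w) (hcoord1 w)) (homog2 Q (hcoord0 w) (hcoord1 w))"
    using rat_map_proj(1)[OF hcoord_nonzero, of w] by simp
  then obtain \<mu> where "homog2 P (hcoord0 w) (hcoord1 w) = \<mu> * hcoord0 (rat_map P Q w)"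
      "homog2 Q (hcoord0 w) (hcoord1 w) = \<mu> * hcoord1 (rat_map P Q w)"
    using hcoord_proj[OF rat_map_proj(2)[OF hcoord_nonzero]] by metis
  then show ?thesis
    using that[of \<mu>] by (simp add: det2_def sphere_det_def algebra_simps)
qed

lemma critical_values_relation:
  assumes "critical_point (rat_map P Q) c1" "critical_point (rat_map P Q) c2"
  obtains k1 k2 where "k1 \<noteq> 0" "k2 \<noteq> 0"
    "\<And>w. k2 * (sphere_det c2 w)^2 * sphere_det (rat_map P Q w) (rat_map P Q c1)
       = k1 * (sphere_det c1 w)^2 * sphere_det (rat_map P Q w) (rat_map P Q c2)"
proof -
  obtain k1 where "k1 \<noteq> 0" and form1: "\<And>w. det2 (homog2 P (hcoord0 w) (hcoord1 w))
      (homog2 Q (hcoord0 w) (hcoord1 w)) (hcoord0 (rat_map P Q c1)) (hcoord1 (rat_map P Q c1))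
      = k1 * (sphere_det c1 w)^2"
    using critical_point_square_form[OF assms(1)] by blast
  obtain k2 where "k2 \<noteq> 0" and form2: "\<And>w. det2 (homog2 P (hcoord0 w) (hcoord1 w))
      (homog2 Q (hcoord0 w) (hcoord1 w)) (hcoord0 (rat_map P Q c2)) (hcoord1 (rat_map P Q c2))
      = k2 * (sphere_det c2 w)^2"
    using critical_point_square_form[OF assms(2)] by blast
  have "k2 * (sphere_det c2 w)^2 * sphere_det (rat_map P Q w) (rat_map P Q c1)
      = k1 * (sphere_det c1 w)^2 * sphere_det (rat_map P Q w) (rat_map P Q c2)" for w
  proof -
    obtain \<mu> where \<mu>: "\<And>v. det2 (homog2 P (hcoord0 w) (hcoord1 w))
        (homog2 Q (hcoord0 w) (hcoord1 w)) (hcoord0 v) (hcoord1 v)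
        = \<mu> * sphere_det (rat_map P Q w) v"
      using homog2_det_sphere_det[where w = w] by blast
    show ?thesis
      unfolding form1[of w, symmetric] form2[of w, symmetric] \<mu> by (simp add: mult_ac)
  qed
  then show ?thesis using that \<open>k1 \<noteq> 0\<close> \<open>k2 \<noteq> 0\<close> by blast
qed

text \<open>A quadratic map is two-to-one off its critical points, so distinct critical points have
  distinct critical values.\<close>

lemma critical_values_distinct:
  assumes "critical_point (rat_map P Q) c1" "critical_point (rat_map P Q) c2" "c1 \<noteq> c2"
  shows "rat_map P Q c1 \<noteq> rat_map P Q c2"
proof
  assume eq: "rat_map P Q c1 = rat_map P Q c2"
  obtain k where "k \<noteq> 0" and form: "det2 (homog2 P (hcoord0 c1) (hcoord1 c1))
      (homog2 Q (hcoord0 c1) (hcoord1 c1)) (hcoord0 (rat_map P Q c2)) (hcoord1 (rat_map P Q c2))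
      = k * (sphere_det c2 c1)^2"
    using critical_point_square_form[OF assms(2)] by blast
  obtain \<mu> where "\<And>v. det2 (homog2 P (hcoord0 c1) (hcoord1 c1))
      (homog2 Q (hcoord0 c1) (hcoord1 c1)) (hcoord0 v) (hcoord1 v)
      = \<mu> * sphere_det (rat_map P Q c1) v"
    using homog2_det_sphere_det[where w = c1] by blast
  then show False using form eq \<open>k \<noteq> 0\<close> assms(3) by simp
qed

end

lemma cross_ratio_equations_solutions:
  fixes x e :: complex
  assumes "x \<noteq> 1" "x * (x + e)^2 = (x - e)^2" "x * (1 + e)^2 = (1 - e)^2"
  shows "x \<in> {-1, 3 + 2 * of_real (sqrt 2), 3 - 2 * of_real (sqrt 2)}"
proof -
  have "(x - 1) * (x + 1) * (2 * e + x - 1) = 0" using assms(2,3) by algebra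
  then have "x - 1 = 0 \<or> x + 1 = 0 \<or> 2 * e + x - 1 = 0" by simp
  then have "x = -1 \<or> 2 * e = 1 - x" using assms(1) by (auto simp: algebra_simps add_eq_0_iff)
  then show ?thesis
  proof
    assume "2 * e = 1 - x"
    then have "(x - 1) * (x^2 - 6 * x + 1) = 0" using assms(3) by algebra
    then have "x^2 - 6 * x + 1 = 0" using assms(1) by simp
    then have "(x - 3)^2 = (2 * of_real (sqrt 2))^2"
      by (simp add: power2_eq_square algebra_simps flip: of_real_mult)
    then have "x - 3 = 2 * of_real (sqrt 2) \<or> x - 3 = - (2 * of_real (sqrt 2))"
      using power2_eq_iff[of "x - 3" "2 * of_real (sqrt 2)"] by blast
    then show ?thesis by (auto simp: algebra_simps)
  qed simp
qed

text \<open>Here (r_i, s_i) are the coordinates of the critical point c_i and (x_0, x_1), (y_0, y_1)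
  those of \<alpha> and \<beta> with respect to the basis of critical values; h1, ..., h4 are the relations at
  w = v1, v2, \<beta>, \<alpha>.\<close>

lemma critical_coordinates_opposite:
  fixes k1 k2 r1 s1 r2 s2 y0 y1 :: complex
  assumes "k1 \<noteq> 0" "y1 \<noteq> 0" "r1 * s2 - r2 * s1 \<noteq> 0"
    and "k1 * s1^2 * y1 = k2 * s2^2 * y0" "k1 * r1^2 * y1 = k2 * r2^2 * y0"
  shows "s1 * r2 = - (r1 * s2)" "r1 \<noteq> 0" "r2 \<noteq> 0"
proof -
  have "k1 * y1 * (s1 * r2)^2 = (k1 * s1^2 * y1) * r2^2"
    by (simp add: algebra_simps power2_eq_square)
  also have "\<dots> = s2^2 * (k2 * r2^2 * y0)"
    unfolding assms(4) by (simp add: algebra_simps)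
  also have "\<dots> = k1 * y1 * (r1 * s2)^2"
    unfolding assms(5)[symmetric] by (simp add: algebra_simps power2_eq_square)
  finally have "k1 * y1 * (s1 * r2)^2 = k1 * y1 * (r1 * s2)^2" .
  then have "(s1 * r2 - r1 * s2) * (s1 * r2 + r1 * s2) = 0"
    using assms(1,2) by (simp add: algebra_simps power2_eq_square)
  moreover have "s1 * r2 - r1 * s2 \<noteq> 0" using assms(3) by (simp add: algebra_simps)
  ultimately show sr: "s1 * r2 = - (r1 * s2)" by (simp add: add_eq_0_iff)
  then show "r1 \<noteq> 0" "r2 \<noteq> 0" using assms(3) by auto
qed

lemma critical_orbit_ratio:
  fixes k1 k2 r1 s1 r2 s2 x0 x1 y0 y1 :: complex
  assumes nonzero: "k1 \<noteq> 0" "k2 \<noteq> 0" "x0 \<noteq> 0" "x1 \<noteq> 0" "y0 \<noteq> 0" "y1 \<noteq> 0"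
    and independent: "r1 * s2 - r2 * s1 \<noteq> 0" "x0 * y1 - x1 * y0 \<noteq> 0"
    and h1: "k1 * s1^2 * y1 = k2 * s2^2 * y0"
    and h2: "k1 * r1^2 * y1 = k2 * r2^2 * y0"
    and h3: "k1 * (r1 * y0 + s1 * y1)^2 * x1 = k2 * (r2 * y0 + s2 * y1)^2 * x0"
    and h4: "k1 * (r1 * x0 + s1 * x1)^2 * x1 = k2 * (r2 * x0 + s2 * x1)^2 * x0"
  shows "y0 * x1 / (y1 * x0) \<in> {-1, 3 + 2 * of_real (sqrt 2), 3 - 2 * of_real (sqrt 2)}"
proof -
  note opposite = critical_coordinates_opposite[OF nonzero(1,6) independent(1) h1 h2]
  define a where "a = x0 / x1"
  define b where "b = y0 / y1"
  define c where "c = s1 / r1"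
  have x0: "x0 = a * x1" and y0: "y0 = b * y1" and s1: "s1 = c * r1" and s2: "s2 = - (c * r2)"
    using nonzero opposite unfolding a_def b_def c_def by (auto simp: field_simps)
  have "a \<noteq> 0" using nonzero x0 by auto
  have k: "k1 * r1^2 = k2 * r2^2 * b"
    using h2 nonzero unfolding y0 by (simp add: field_simps)
  have "k1 * r1^2 * y1^2 * (b + c)^2 * x1 = k2 * r2^2 * y1^2 * (b - c)^2 * (a * x1)"
    using h3 unfolding x0 y0 s1 s2 by (simp add: algebra_simps power2_eq_square)
  then have "(k2 * r2^2 * y1^2 * x1) * (b * (b + c)^2) = (k2 * r2^2 * y1^2 * x1) * ((b - c)^2 * a)"
    unfolding k by (simp add: algebra_simps power2_eq_square)
  then have eq3: "b * (b + c)^2 = (b - c)^2 * a" using nonzero opposite by simp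
  have "k1 * r1^2 * x1^2 * (a + c)^2 * x1 = k2 * r2^2 * x1^2 * (a - c)^2 * (a * x1)"
    using h4 unfolding x0 s1 s2 by (simp add: algebra_simps power2_eq_square)
  then have "(k2 * r2^2 * x1^3) * (b * (a + c)^2) = (k2 * r2^2 * x1^3) * ((a - c)^2 * a)"
    unfolding k by (simp add: algebra_simps power2_eq_square power3_eq_cube)
  then have eq4: "b * (a + c)^2 = (a - c)^2 * a" using nonzero opposite by simp
  have "(b / a) * ((b / a) + (c / a))^2 = (b * (b + c)^2) / a^3"
    "((b / a) - (c / a))^2 = ((b - c)^2 * a) / a^3"
    "(b / a) * (1 + (c / a))^2 = (b * (a + c)^2) / a^3"
    "(1 - (c / a))^2 = ((a - c)^2 * a) / a^3"
    using \<open>a \<noteq> 0\<close> by (simp_all add: field_simps power2_eq_square power3_eq_cube)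
  then have "(b / a) * ((b / a) + (c / a))^2 = ((b / a) - (c / a))^2"
    "(b / a) * (1 + (c / a))^2 = (1 - (c / a))^2"
    using eq3 eq4 by simp_all
  moreover have "b / a \<noteq> 1" using independent(2) \<open>a \<noteq> 0\<close> unfolding x0 y0 by (auto simp: field_simps)
  moreover have "y0 * x1 / (y1 * x0) = b / a" unfolding x0 y0 using nonzero by (simp add: field_simps)
  ultimately show ?thesis using cross_ratio_equations_solutions by simp
qed

lemma postcritical_cross_ratio:
  fixes f :: "csphere \<Rightarrow> csphere" and k1 k2 :: complex
  assumes "k1 \<noteq> 0" "k2 \<noteq> 0" "c1 \<noteq> c2" "v1 \<noteq> v2" "\<alpha> \<noteq> \<beta>"
    and "\<alpha> \<noteq> v1" "\<alpha> \<noteq> v2" "\<beta> \<noteq> v1" "\<beta> \<noteq> v2"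
    and relation: "\<And>w. k2 * (sphere_det c2 w)^2 * sphere_det (f w) v1
      = k1 * (sphere_det c1 w)^2 * sphere_det (f w) v2"
    and orbit: "f v1 = \<beta>" "f v2 = \<beta>" "f \<beta> = \<alpha>" "f \<alpha> = \<alpha>"
  shows "cross_ratio v1 v2 \<alpha> \<beta> \<in> Some ` {-1, 3 + 2 * sqrt 2, 3 - 2 * sqrt 2}"
proof -
  define r where "r c = sphere_det v2 c" for c
  define s where "s c = sphere_det c v1" for c
  have coords: "r c * sphere_det w v1 + s c * sphere_det w v2 = sphere_det v1 v2 * sphere_det c w"
    for c w
    unfolding r_def s_def by (rule sphere_det_pluecker)
  have squares: "(sphere_det c v1)^2 = (s c)^2" "(sphere_det c v2)^2 = (r c)^2" for c
    by (simp_all add: r_def s_def sphere_det_swap[of c v2])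
  have at_image: "k2 * (r c2 * sphere_det w v1 + s c2 * sphere_det w v2)^2 * sphere_det W v1
      = k1 * (r c1 * sphere_det w v1 + s c1 * sphere_det w v2)^2 * sphere_det W v2"
    if "f w = W" for w W
    using arg_cong[OF relation[of w], of "\<lambda>z. (sphere_det v1 v2)^2 * z"] that
    unfolding coords by (simp add: power_mult_distrib mult_ac)
  have "r c1 * s c2 - r c2 * s c1 \<noteq> 0"
    using coords[of c1 c2] assms(3,4) by (simp add: r_def s_def sphere_det_swap[of c2 v2] algebra_simps)
  moreover have "sphere_det \<alpha> v1 * sphere_det \<beta> v2 - sphere_det \<alpha> v2 * sphere_det \<beta> v1 \<noteq> 0"
    using coords[of \<alpha> \<beta>] assms(4,5)
    by (simp add: r_def s_def sphere_det_swap[of \<alpha> v2] algebra_simps)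
  moreover have "k1 * (s c1)^2 * sphere_det \<beta> v2 = k2 * (s c2)^2 * sphere_det \<beta> v1"
    "k1 * (r c1)^2 * sphere_det \<beta> v2 = k2 * (r c2)^2 * sphere_det \<beta> v1"
    using relation[of v1] relation[of v2] by (simp_all add: orbit squares)
  ultimately have "sphere_det \<beta> v1 * sphere_det \<alpha> v2 / (sphere_det \<beta> v2 * sphere_det \<alpha> v1)
      \<in> {-1, 3 + 2 * of_real (sqrt 2), 3 - 2 * of_real (sqrt 2)}"
    using assms(1,2,6-9) at_image[OF orbit(3), symmetric] at_image[OF orbit(4), symmetric]
    by (intro critical_orbit_ratio) auto
  moreover have "cross_ratio v1 v2 \<alpha> \<beta>
      = Some (sphere_det \<beta> v1 * sphere_det \<alpha> v2 / (sphere_det \<beta> v2 * sphere_det \<alpha> v1))"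
    using assms(4,6,7,9)
    by (simp add: cross_ratio_sphere_det proj_def sphere_det_swap[of v1] algebra_simps)
  ultimately show ?thesis by simp
qed

theorem mainTheorem18:
  fixes f :: "csphere \<Rightarrow> csphere" and c1 c2 v1 v2 \<alpha> \<beta> :: csphere
  assumes "quadratic_rational_map f"
    and "c1 \<noteq> c2" and "critical_point f c1" and "critical_point f c2"
    and "v1 = f c1" and "v2 = f c2"
    and "f v1 = \<beta>" and "f v2 = \<beta>" and "f \<beta> = \<alpha>" and "f \<alpha> = \<alpha>"
    and "\<alpha> \<noteq> \<beta>"
  shows "cross_ratio v1 v2 \<alpha> \<beta> \<in> Some ` {-1, 3 + 2 * sqrt 2, 3 - 2 * sqrt 2}"
proof -
  obtain P Q where "coprime P Q" "max (degree P) (degree Q) = 2" and f: "f = rat_map P Q"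
    using assms(1) unfolding quadratic_rational_map_def by blast
  then interpret quadratic_rat_map P Q by unfold_locales
  obtain k1 k2 where "k1 \<noteq> 0" "k2 \<noteq> 0" and relation: "\<And>w. k2 * (sphere_det c2 w)^2 * sphere_det (f w) v1
      = k1 * (sphere_det c1 w)^2 * sphere_det (f w) v2"
    using critical_values_relation assms(3-6) unfolding f by metis
  moreover have "v1 \<noteq> v2"
    using critical_values_distinct assms(2-6) unfolding f by blast
  moreover have "\<alpha> \<noteq> v1" "\<alpha> \<noteq> v2" "\<beta> \<noteq> v1" "\<beta> \<noteq> v2"
    using assms(7-11) by auto
  ultimately show ?thesis
    using postcritical_cross_ratio assms(2,7-11) by blast
qed

end
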